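(* Let $\mathcal K$ be a compact subset of $\mathcal L_{\mathbb C}$. There are constants $r_0>0$ and $C<\infty$ such that for any $x\in\mathbf S^3$, $L\in\mathcal K$ and $0<\delta\le r\le r_0$, \[\eta_L(A(x,r,\delta))\le C\delta^{1/2},\qquad\text{where }A(x,r,\delta)=\{y\in\mathbf S^3:r\le d(x,y)\le r+\delta\}.\]
   Context: On $\mathbb{C}^3$: $u\cdot v=\sum u_i\bar v_i$, $\|u\|=\sqrt{u\cdot u}$, $\langle u,v\rangle=u_0\bar v_0-u_1\bar v_1-u_2\bar v_2$, $q(u)=\langle u,u\rangle$, $\|u\wedge v\|^2=\|u\|^2\|v\|^2-|u\cdot v|^2$. $\mathbf S^3=\{u\in\mathbb P^2_{\mathbb C}:q(u)=0\}$ with visual metric $d(u,v)=\sqrt{|\langle u,v\rangle|/(\|u\|\|v\|)}$. $\mathcal L_{\mathbb C}=\{w\in\mathbb P^2_{\mathbb C}:q(w)<0\}$ with metric $d_E(u,v)=\|u\wedge v\|/(\|u\|\|v\|)$; $w$ is identified with the chain $L_w=\{u\in\mathbf S^3:\langle u,w\rangle=0\}$. For a chain $L$, $\eta_L$ is the $2$-dimensional Hausdorff measure on $L$ with respect to $d$. *)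

theory Defs
  imports "HOL-Analysis.Analysis"
begin

type_synonym cvec = "complex^3"

definition herm_std :: "cvec \<Rightarrow> cvec \<Rightarrow> complex" where
  "herm_std u v = u$0 * cnj (v$0) + u$1 * cnj (v$1) + u$2 * cnj (v$2)"

definition herm :: "cvec \<Rightarrow> cvec \<Rightarrow> complex" where
  "herm u v = u$0 * cnj (v$0) - u$1 * cnj (v$1) - u$2 * cnj (v$2)"

definition qform :: "cvec \<Rightarrow> complex" where
  "qform u = herm u u"

text \<open>||u wedge v||^2 = ||u||^2 ||v||^2 - |u . v|^2\<close>
definition wedge_norm :: "cvec \<Rightarrow> cvec \<Rightarrow> real" where
  "wedge_norm u v = sqrt ((norm u)^2 * (norm v)^2 - (cmod (herm_std u v))^2)"

definition proj_pt :: "cvec set \<Rightarrow> bool" where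
  "proj_pt P \<longleftrightarrow> (\<exists>u. u \<noteq> 0 \<and> P = range (\<lambda>c::complex. c *s u))"

definition ProjPlane :: "cvec set set" where
  "ProjPlane = {P. proj_pt P}"

definition rep :: "cvec set \<Rightarrow> cvec" where
  "rep P = (SOME u. u \<in> P \<and> u \<noteq> 0)"

definition S3 :: "cvec set set" where
  "S3 = {P \<in> ProjPlane. qform (rep P) = 0}"

text \<open>Negative points L_C = {q < 0} (q(u) is real).\<close>
definition LC :: "cvec set set" where
  "LC = {P \<in> ProjPlane. Re (qform (rep P)) < 0}"

definition dvis :: "cvec set \<Rightarrow> cvec set \<Rightarrow> real" where
  "dvis P Q = sqrt (cmod (herm (rep P) (rep Q)) / (norm (rep P) * norm (rep Q)))"

definition dE :: "cvec set \<Rightarrow> cvec set \<Rightarrow> real" where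
  "dE P Q = wedge_norm (rep P) (rep Q) / (norm (rep P) * norm (rep Q))"

definition chain_of :: "cvec set \<Rightarrow> cvec set set" where
  "chain_of w = {P \<in> S3. herm (rep P) (rep w) = 0}"

definition diam_wrt :: "('a \<Rightarrow> 'a \<Rightarrow> real) \<Rightarrow> 'a set \<Rightarrow> ennreal" where
  "diam_wrt d U = (SUP x\<in>U. SUP y\<in>U. ennreal (d x y))"

definition hausdorff_pre :: "('a \<Rightarrow> 'a \<Rightarrow> real) \<Rightarrow> real \<Rightarrow> real \<Rightarrow> 'a set \<Rightarrow> ennreal" where
  "hausdorff_pre d s \<delta> A =
     (Inf {(\<Sum>i. ennreal ((enn2real (diam_wrt d (U i))) powr s)) | U :: nat \<Rightarrow> 'a set.
          A \<subseteq> (\<Union>i. U i) \<and> (\<forall>i. diam_wrt d (U i) \<le> ennreal \<delta>)})"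

definition hausdorff_meas :: "('a \<Rightarrow> 'a \<Rightarrow> real) \<Rightarrow> real \<Rightarrow> 'a set \<Rightarrow> ennreal" where
  "hausdorff_meas d s A = (SUP \<delta>\<in>{0<..}. hausdorff_pre d s \<delta> A)"

definition eta :: "cvec set \<Rightarrow> cvec set set \<Rightarrow> ennreal" where
  "eta L B = hausdorff_meas dvis 2 (B \<inter> chain_of L)"

definition annulus :: "cvec set \<Rightarrow> real \<Rightarrow> real \<Rightarrow> cvec set set" where
  "annulus x r \<delta> = {y \<in> S3. r \<le> dvis x y \<and> dvis x y \<le> r + \<delta>}"

end

theory Submission
  imports Defs
begin

(* A chain L_w, q(w) < 0, is the image of the circle t |-> [e1 + e^(it) e2], where (e1, e2, w)
   is a frame orthogonal for <.,.> with <e1,e1> = 1 = -<e2,e2>. This parametrisation is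
   1/2-Hoelder for the visual metric with constant |e1|^2 = 1/kappa(w), where
   kappa(w) = -q(w)/|w|^2, so eta_L of the image of parameter intervals of total length l is
   at most 2 l / kappa(w).
   For a null vector x, |<x, u_t>|^2 - r^4 |u_t|^2 is a first-order trigonometric polynomial
   A + 2 Re (Z e^(it)), and r <= d(x, [u_t]) <= r + delta confines it to a band of width
   O(delta). If r is small compared to kappa(w) and the annulus meets the chain, |Z| is bounded
   below, and since arccos is 1/2-Hoelder, the parameters in the band form two intervals of
   length O(sqrt delta). Finally kappa is Lipschitz for d_E, hence bounded below on the compact
   set K, which makes all constants uniform. *)

lemma sum_UNIV_3: "sum f (UNIV::3 set) = f 0 + f 1 + f 2"
proof -
  have three: "(3::3) = 0" by simp
  show ?thesis unfolding sum_3 three by (simp add: add_ac)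
qed

lemma cvec_eq_iff: "(x::cvec) = y \<longleftrightarrow> x$0 = y$0 \<and> x$1 = y$1 \<and> x$2 = y$2"
proof -
  have three: "(3::3) = 0" by simp
  show ?thesis unfolding vec_eq_iff forall_3 three by auto
qed

lemma norm_cvec_sq: "(norm (x::cvec))^2 = (cmod (x$0))^2 + (cmod (x$1))^2 + (cmod (x$2))^2"
  by (simp add: norm_vec_def L2_set_def sum_UNIV_3)

lemma norm_smult_cvec: "norm (c *s (v::cvec)) = cmod c * norm v"
proof -
  have "(norm (c *s v))^2 = (cmod c * norm v)^2"
    unfolding norm_cvec_sq power_mult_distrib by (simp add: norm_mult power_mult_distrib algebra_simps)
  then show ?thesis by (simp add: power2_eq_iff_nonneg)
qed

lemma herm_std_self: "herm_std u u = of_real ((norm u)^2)"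
  unfolding herm_std_def norm_cvec_sq by (simp add: complex_mult_cnj cmod_power2 del: of_real_power)

lemma herm_std_sesquilinear:
  "herm_std (u + v) z = herm_std u z + herm_std v z"
  "herm_std z (u + v) = herm_std z u + herm_std z v"
  "herm_std (a *s u) z = a * herm_std u z"
  "herm_std u (a *s z) = cnj a * herm_std u z"
  by (simp_all add: herm_std_def algebra_simps)

lemma herm_std_commute: "herm_std v u = cnj (herm_std u v)"
  by (simp add: herm_std_def)

lemma inner_eq_Re_herm_std: "inner u v = Re (herm_std u v)"
  by (simp add: inner_vec_def sum_UNIV_3 herm_std_def inner_complex_def)

lemma norm_herm_std_le: "cmod (herm_std u v) \<le> norm u * norm v"
proof (cases "herm_std u v = 0")
  case False
  define l where "l = sgn (herm_std u v)"
  have "cmod (herm_std u v) = Re (herm_std u (l *s v))"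
    unfolding herm_std_sesquilinear l_def
    by (simp add: sgn_eq complex_norm_square[symmetric] mult.commute power2_eq_square)
  also have "\<dots> = inner u (l *s v)" by (simp add: inner_eq_Re_herm_std)
  also have "\<dots> \<le> norm u * norm (l *s v)" by (rule norm_cauchy_schwarz)
  also have "norm (l *s v) = norm v"
    using False by (simp add: l_def norm_smult_cvec norm_sgn)
  finally show ?thesis .
qed simp

definition sig_flip :: "cvec \<Rightarrow> cvec" where
  "sig_flip v = (\<chi> i. if i = 0 then v$0 else - v$i)"

lemma herm_eq_herm_std_sig_flip: "herm u v = herm_std u (sig_flip v)"
  by (simp add: herm_def herm_std_def sig_flip_def)

lemma norm_sig_flip: "norm (sig_flip v) = norm v"
  by (simp add: norm_eq_sqrt_inner inner_eq_Re_herm_std herm_std_self[symmetric])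
     (simp add: herm_std_def sig_flip_def)

lemma norm_herm_le: "cmod (herm u v) \<le> norm u * norm v"
  using norm_herm_std_le[of u "sig_flip v"] by (simp add: herm_eq_herm_std_sig_flip norm_sig_flip)

lemma herm_sesquilinear:
  "herm (u + v) z = herm u z + herm v z"
  "herm (u - v) z = herm u z - herm v z"
  "herm z (u + v) = herm z u + herm z v"
  "herm z (u - v) = herm z u - herm z v"
  "herm (a *s u) z = a * herm u z"
  "herm u (a *s z) = cnj a * herm u z"
  by (simp_all add: herm_def algebra_simps)

lemma herm_commute: "herm v u = cnj (herm u v)"
  by (simp add: herm_def)

lemma herm_zero [simp]: "herm 0 v = 0" "herm v 0 = 0"
  by (simp_all add: herm_def)

section \<open>A frame adapted to a negative vector\<close>

definition qneg :: "cvec \<Rightarrow> real" where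
  "qneg w = - Re (qform w)"

definition spatial_sq :: "cvec \<Rightarrow> real" where
  "spatial_sq w = (cmod (w$1))^2 + (cmod (w$2))^2"

lemma qneg_eq: "qneg w = spatial_sq w - (cmod (w$0))^2"
  by (simp add: qneg_def qform_def herm_def spatial_sq_def complex_mult_cnj cmod_power2)

lemma qneg_le_spatial_sq: "qneg w \<le> spatial_sq w"
  by (simp add: qneg_eq)

lemma qneg_le_norm_sq: "qneg w \<le> (norm w)^2"
  by (simp add: qneg_eq spatial_sq_def norm_cvec_sq)

lemma qneg_smult: "qneg (c *s u) = (cmod c)^2 * qneg u"
  by (simp add: qneg_eq spatial_sq_def norm_mult power_mult_distrib algebra_simps)

definition mk_cvec :: "complex \<Rightarrow> complex \<Rightarrow> complex \<Rightarrow> cvec" where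
  "mk_cvec a b c = (\<chi> i. if i = 0 then a else if i = 1 then b else c)"

lemma mk_cvec_nth [simp]: "mk_cvec a b c $ 0 = a" "mk_cvec a b c $ 1 = b" "mk_cvec a b c $ 2 = c"
  by (simp_all add: mk_cvec_def)

text \<open>For q(w) < 0, gvec w and fvec w span the orthogonal complement of w: fvec w is
  orthogonal to the spatial part of w, and gvec w is orthogonal to both.\<close>

definition gvec :: "cvec \<Rightarrow> cvec" where
  "gvec w = mk_cvec (of_real (spatial_sq w)) (cnj (w$0) * w$1) (cnj (w$0) * w$2)"

definition fvec :: "cvec \<Rightarrow> cvec" where
  "fvec w = mk_cvec 0 (cnj (w$2)) (- cnj (w$1))"

lemma spatial_sq_complex: "complex_of_real (spatial_sq w) = w$1 * cnj (w$1) + w$2 * cnj (w$2)"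
  unfolding spatial_sq_def of_real_add complex_norm_square ..

lemma qneg_complex: "complex_of_real (qneg w) = w$1 * cnj (w$1) + w$2 * cnj (w$2) - w$0 * cnj (w$0)"
  unfolding qneg_eq of_real_diff spatial_sq_complex complex_norm_square ..

lemma herm_gvec_fvec:
  "herm (gvec w) (gvec w) = of_real (spatial_sq w * qneg w)"
  "herm (fvec w) (fvec w) = - of_real (spatial_sq w)"
  "herm (gvec w) (fvec w) = 0"
  unfolding herm_def gvec_def fvec_def mk_cvec_nth of_real_mult spatial_sq_complex qneg_complex
  by (simp_all add: algebra_simps)

lemma norm_gvec_sq: "(norm (gvec w))^2 = spatial_sq w * (norm w)^2"
proof -
  have "complex_of_real ((norm (gvec w))^2) = complex_of_real (spatial_sq w * (norm w)^2)"
    unfolding norm_cvec_sq of_real_add of_real_mult complex_norm_square gvec_def mk_cvec_nth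
      spatial_sq_complex
    by (simp add: algebra_simps)
  then show ?thesis using of_real_eq_iff by blast
qed

lemma norm_fvec_sq: "(norm (fvec w))^2 = spatial_sq w"
  unfolding norm_cvec_sq fvec_def mk_cvec_nth spatial_sq_def by simp

lemma frame_decomposition_unnormalised:
  "of_real (spatial_sq w * qneg w) *s x =
     herm x (gvec w) *s gvec w - of_real (qneg w) * herm x (fvec w) *s fvec w
       - of_real (spatial_sq w) * herm x w *s w"
  unfolding cvec_eq_iff herm_def gvec_def fvec_def of_real_mult
  by (simp add: spatial_sq_complex qneg_complex algebra_simps)

definition e1 :: "cvec \<Rightarrow> cvec" where
  "e1 w = of_real (1 / sqrt (spatial_sq w * qneg w)) *s gvec w"

definition e2 :: "cvec \<Rightarrow> cvec" where
  "e2 w = of_real (1 / sqrt (spatial_sq w)) *s fvec w"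

definition e3 :: "cvec \<Rightarrow> cvec" where
  "e3 w = of_real (1 / sqrt (qneg w)) *s w"

lemma herm_proj_scale:
  "herm x (of_real c *s v) *s (of_real c *s v) = of_real (c^2) *s (herm x v *s v)"
  by (simp add: herm_sesquilinear vector_smult_assoc power2_eq_square mult_ac)

context
  fixes w :: cvec
  assumes qneg_pos: "qneg w > 0"
begin

lemma spatial_sq_pos: "spatial_sq w > 0"
  using qneg_pos qneg_le_spatial_sq[of w] by linarith

lemma frame_decomposition: "x = herm x (e1 w) *s e1 w - herm x (e2 w) *s e2 w - herm x (e3 w) *s e3 w"
proof -
  define s k where "s = spatial_sq w" and "k = qneg w"
  have sk: "s > 0" "k > 0" using spatial_sq_pos qneg_pos by (simp_all add: s_def k_def)
  have "herm x (e1 w) *s e1 w - herm x (e2 w) *s e2 w - herm x (e3 w) *s e3 w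
      = of_real (1 / (s * k)) *s (herm x (gvec w) *s gvec w - of_real k * herm x (fvec w) *s fvec w
          - of_real s * herm x w *s w)"
    unfolding e1_def e2_def e3_def herm_proj_scale s_def[symmetric] k_def[symmetric]
    using sk by (simp add: cvec_eq_iff power_divide field_simps)
  also have "\<dots> = x"
    unfolding s_def k_def frame_decomposition_unnormalised[symmetric]
    using sk by (simp add: vector_smult_assoc s_def k_def)
  finally show ?thesis by simp
qed

lemma frame_orthonormal:
  "herm (e1 w) (e1 w) = 1" "herm (e2 w) (e2 w) = -1"
  "herm (e1 w) (e2 w) = 0" "herm (e2 w) (e1 w) = 0"
proof -
  have "sqrt (spatial_sq w * qneg w) * sqrt (spatial_sq w * qneg w) = spatial_sq w * qneg w"
    "sqrt (spatial_sq w) * sqrt (spatial_sq w) = spatial_sq w"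
    using spatial_sq_pos qneg_pos by simp_all
  then show "herm (e1 w) (e1 w) = 1" "herm (e2 w) (e2 w) = -1" "herm (e1 w) (e2 w) = 0"
    unfolding e1_def e2_def herm_sesquilinear herm_gvec_fvec
    using spatial_sq_pos qneg_pos by (simp_all flip: of_real_mult)
  then show "herm (e2 w) (e1 w) = 0" by (metis herm_commute complex_cnj_zero)
qed

lemma herm_e3_eq_0: "herm x w = 0 \<Longrightarrow> herm x (e3 w) = 0"
  unfolding e3_def herm_sesquilinear by simp

lemma norm_e1_sq: "(norm (e1 w))^2 = (norm w)^2 / qneg w"
  using spatial_sq_pos qneg_pos
  by (simp add: e1_def norm_smult_cvec power_mult_distrib power_divide norm_gvec_sq
      del: of_real_divide)

lemma norm_e2: "norm (e2 w) = 1"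
proof -
  have "(norm (e2 w))^2 = 1"
    using spatial_sq_pos
    by (simp add: e2_def norm_smult_cvec power_divide norm_fvec_sq del: of_real_divide)
  then show ?thesis by (metis norm_ge_zero power2_eq_iff_nonneg power_one zero_le_one)
qed

lemma norm_e3_sq: "(norm (e3 w))^2 = (norm w)^2 / qneg w"
  using qneg_pos
  by (simp add: e3_def norm_smult_cvec power_mult_distrib power_divide del: of_real_divide)

lemma norm_e1_ge_1: "1 \<le> norm (e1 w)"
proof -
  have "1 \<le> (norm w)^2 / qneg w" using qneg_pos qneg_le_norm_sq[of w] by simp
  then show ?thesis unfolding norm_e1_sq[symmetric]
    using power2_le_imp_le[of 1 "norm (e1 w)"] by simp
qed

lemma frame_parseval:
  "herm x x = herm x (e1 w) * cnj (herm x (e1 w)) - herm x (e2 w) * cnj (herm x (e2 w))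
     - herm x (e3 w) * cnj (herm x (e3 w))"
proof -
  have "herm x x = herm (herm x (e1 w) *s e1 w - herm x (e2 w) *s e2 w - herm x (e3 w) *s e3 w) x"
    using frame_decomposition[of x] by simp
  then show ?thesis unfolding herm_sesquilinear by (metis herm_commute)
qed

end

definition line :: "cvec \<Rightarrow> cvec set" where
  "line u = range (\<lambda>c::complex. c *s u)"

lemma line_smult: "c \<noteq> 0 \<Longrightarrow> line (c *s u) = line u"
proof
  show "line (c *s u) \<subseteq> line u" unfolding line_def by (auto simp: vector_smult_assoc)
  assume "c \<noteq> 0"
  have "d *s u = (d / c) *s (c *s u)" for d using \<open>c \<noteq> 0\<close> by (simp add: vector_smult_assoc)
  then show "line u \<subseteq> line (c *s u)" unfolding line_def by (metis image_subsetI rangeI)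
qed

lemma ProjPlane_eq_line:
  assumes "P \<in> ProjPlane" obtains u where "u \<noteq> 0" "P = line u"
  using assms unfolding ProjPlane_def proj_pt_def line_def by blast

lemma rep_line: "u \<noteq> 0 \<Longrightarrow> \<exists>c. c \<noteq> 0 \<and> rep (line u) = c *s u"
proof -
  assume "u \<noteq> 0"
  then have "\<exists>v. v \<in> line u \<and> v \<noteq> 0" unfolding line_def by (metis rangeI vector_smult_lid)
  then have "rep (line u) \<in> line u \<and> rep (line u) \<noteq> 0" unfolding rep_def by (rule someI_ex)
  then show ?thesis unfolding line_def by auto
qed

lemma rep_nonzero: "P \<in> ProjPlane \<Longrightarrow> rep P \<noteq> 0"
  by (metis ProjPlane_eq_line rep_line vector_mul_eq_0)

lemma line_rep: "P \<in> ProjPlane \<Longrightarrow> line (rep P) = P"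
  by (metis ProjPlane_eq_line rep_line line_smult)

definition unit_rep :: "cvec set \<Rightarrow> cvec" where
  "unit_rep P = of_real (1 / norm (rep P)) *s rep P"

lemma norm_unit_rep: "P \<in> ProjPlane \<Longrightarrow> norm (unit_rep P) = 1"
  using rep_nonzero by (simp add: unit_rep_def norm_smult_cvec del: of_real_divide)

lemma line_unit_rep: "P \<in> ProjPlane \<Longrightarrow> line (unit_rep P) = P"
  using rep_nonzero line_rep by (simp add: unit_rep_def line_smult del: of_real_divide)

definition dvis_vec :: "cvec \<Rightarrow> cvec \<Rightarrow> real" where
  "dvis_vec u v = sqrt (cmod (herm u v) / (norm u * norm v))"

lemma dvis_vec_smult: "a \<noteq> 0 \<Longrightarrow> b \<noteq> 0 \<Longrightarrow> dvis_vec (a *s u) (b *s v) = dvis_vec u v"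
  by (simp add: dvis_vec_def herm_sesquilinear norm_smult_cvec norm_mult)

lemma dvis_line: "u \<noteq> 0 \<Longrightarrow> v \<noteq> 0 \<Longrightarrow> dvis (line u) (line v) = dvis_vec u v"
  unfolding dvis_def dvis_vec_def[symmetric] by (metis rep_line dvis_vec_smult)

section \<open>Parametrisation of a chain\<close>

definition chain_curve :: "cvec \<Rightarrow> real \<Rightarrow> cvec" where
  "chain_curve w t = e1 w + cis t *s e2 w"

lemma cmod_1_minus_cis_le: "cmod (1 - cis x) \<le> \<bar>x\<bar>"
proof -
  have "(cmod (1 - cis x))^2 = (1 - cos x)^2 + (sin x)^2"
    by (simp add: cmod_power2)
  also have "\<dots> = 4 * (sin (x/2))^2"
    using cos_double_sin[of "x/2"] by (simp add: power2_eq_square algebra_simps sin_squared_eq)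
  also have "\<dots> \<le> 4 * (x/2)^2"
    using abs_sin_x_le_abs_x[of "x/2"] abs_le_square_iff[of "sin (x/2)" "x/2"] by simp
  finally have "(cmod (1 - cis x))^2 \<le> \<bar>x\<bar>^2" by (simp add: power_divide)
  then show ?thesis using abs_le_square_iff[of "cmod (1 - cis x)" x] by simp
qed

context
  fixes w :: cvec
  assumes qneg_pos: "qneg w > 0"
begin

lemma herm_chain_curve: "herm (chain_curve w s) (chain_curve w t) = 1 - cis (s - t)"
  unfolding chain_curve_def herm_sesquilinear frame_orthonormal[OF qneg_pos]
  by (simp add: cis_cnj cis_mult)

lemma herm_chain_curve_e1: "herm (chain_curve w t) (e1 w) = 1"
  unfolding chain_curve_def herm_sesquilinear frame_orthonormal[OF qneg_pos] by simp

lemma chain_curve_nonzero: "chain_curve w t \<noteq> 0"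
  using herm_chain_curve_e1 by (metis herm_zero(1) zero_neq_one)

lemma norm_chain_curve_ge: "1 / norm (e1 w) \<le> norm (chain_curve w t)"
proof -
  have "1 \<le> norm (chain_curve w t) * norm (e1 w)"
    using norm_herm_le[of "chain_curve w t" "e1 w"] herm_chain_curve_e1 by simp
  moreover have "e1 w \<noteq> 0" using frame_orthonormal(1)[OF qneg_pos] by auto
  ultimately show ?thesis by (simp add: divide_simps)
qed

lemma norm_chain_curve_le: "norm (chain_curve w t) \<le> norm (e1 w) + 1"
  using norm_triangle_ineq[of "e1 w" "cis t *s e2 w"]
  by (simp add: chain_curve_def norm_smult_cvec norm_e2[OF qneg_pos])

lemma norm_chain_curve_sq:
  "(norm (chain_curve w t))^2 = (norm (e1 w))^2 + 1 + 2 * Re (cnj (herm_std (e1 w) (e2 w)) * cis t)"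
proof -
  define s where "s = herm_std (e1 w) (e2 w)"
  have "complex_of_real ((norm (chain_curve w t))^2)
      = herm_std (e1 w) (e1 w) + herm_std (e2 w) (e2 w) + (cnj s * cis t + cnj (cnj s * cis t))"
    unfolding herm_std_self[symmetric] chain_curve_def herm_std_sesquilinear s_def
    by (simp add: herm_std_commute[of "e2 w" "e1 w"] cis_cnj cis_mult algebra_simps)
  also have "\<dots> = complex_of_real ((norm (e1 w))^2 + 1 + 2 * Re (cnj s * cis t))"
    unfolding herm_std_self complex_add_cnj norm_e2[OF qneg_pos] by simp
  finally show ?thesis unfolding s_def using of_real_eq_iff by blast
qed

lemma chain_curve_holder:
  "(dvis_vec (chain_curve w s) (chain_curve w t))^2 \<le> (norm (e1 w))^2 * \<bar>s - t\<bar>"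
proof -
  have ne: "norm (e1 w) > 0" using frame_orthonormal(1)[OF qneg_pos] by auto
  have lb: "1 / (norm (e1 w))^2 \<le> norm (chain_curve w s) * norm (chain_curve w t)"
    using mult_mono[OF norm_chain_curve_ge[of s] norm_chain_curve_ge[of t]] ne
    by (simp add: power2_eq_square)
  have "(dvis_vec (chain_curve w s) (chain_curve w t))^2
      = cmod (1 - cis (s - t)) / (norm (chain_curve w s) * norm (chain_curve w t))"
    unfolding dvis_vec_def herm_chain_curve by simp
  also have "\<dots> \<le> \<bar>s - t\<bar> / (1 / (norm (e1 w))^2)"
    using lb ne cmod_1_minus_cis_le[of "s - t"] by (intro frac_le) auto
  finally show ?thesis by (simp add: mult.commute)
qed

lemma chain_curve_periodic: "n \<in> \<int> \<Longrightarrow> chain_curve w (t - 2 * n * pi) = chain_curve w t"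
proof -
  assume "n \<in> \<int>"
  then have "cis (- (2 * pi * n)) = 1" using cis_multiple_2pi[of "-n"] by simp
  then have "cis (t - 2 * n * pi) = cis t"
    by (metis (no_types) cis_mult diff_conv_add_uminus mult.commute mult.left_commute mult_1_right)
  then show ?thesis unfolding chain_curve_def by simp
qed

lemma chain_parametrisation:
  assumes "P \<in> S3" "herm (rep P) w = 0"
  shows "\<exists>t. P = line (chain_curve w t)"
proof -
  have P: "P \<in> ProjPlane" using assms(1) unfolding S3_def by auto
  define v p q where "v = rep P" and "p = herm v (e1 w)" and "q = herm v (e2 w)"
  have v0: "v \<noteq> 0" using rep_nonzero[OF P] v_def by simp
  have dec: "v = p *s e1 w - q *s e2 w"
    using frame_decomposition[OF qneg_pos, of v] herm_e3_eq_0[OF qneg_pos] assms(2)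
    by (simp add: v_def p_def q_def)
  have "p * cnj p = q * cnj q"
    using frame_parseval[OF qneg_pos, of v] herm_e3_eq_0[OF qneg_pos] assms
    by (simp add: v_def p_def q_def S3_def qform_def)
  then have pq: "cmod p = cmod q"
    by (metis complex_norm_square norm_ge_zero of_real_eq_iff power2_eq_iff_nonneg)
  have p0: "p \<noteq> 0" using pq dec v0 by auto
  define z where "z = - q / p"
  have "q \<noteq> 0" using pq p0 by auto
  then have z1: "cmod z = 1" using pq by (simp add: z_def norm_divide)
  then have "z \<noteq> 0" by auto
  then have zc: "cis (Arg z) = z" using cis_Arg[of z] z1 by (simp add: sgn_div_norm)
  have "v = p *s chain_curve w (Arg z)"
    unfolding chain_curve_def zc using dec p0
    by (simp add: z_def vector_add_ldistrib vector_smult_assoc)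
  then show ?thesis using line_rep[OF P] line_smult p0 v_def by metis
qed

end

section \<open>Hausdorff measure of images of 1/2-Hoelder curves\<close>

lemma diam_wrt_empty [simp]: "diam_wrt d {} = 0"
  by (simp add: diam_wrt_def bot_ennreal)

lemma hausdorff_pre_le_finite_cover:
  fixes n :: nat
  assumes cover: "A \<subseteq> (\<Union>i<n. U i)" and diam: "\<And>i. i < n \<Longrightarrow> diam_wrt d (U i) \<le> ennreal \<rho>"
    and "0 \<le> \<rho>" "\<rho> \<le> \<delta>"
  shows "hausdorff_pre d 2 \<delta> A \<le> ennreal (real n * \<rho>^2)"
proof -
  define V where "V i = (if i < n then U i else {})" for i
  have "A \<subseteq> (\<Union>i. V i) \<and> (\<forall>i. diam_wrt d (V i) \<le> ennreal \<delta>)"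
    using cover diam assms(3,4) unfolding V_def by (force intro: order_trans ennreal_leI)
  then have "hausdorff_pre d 2 \<delta> A \<le> (\<Sum>i. ennreal (enn2real (diam_wrt d (V i)) powr 2))"
    unfolding hausdorff_pre_def by (blast intro: Inf_lower)
  also have "\<dots> = (\<Sum>i<n. ennreal (enn2real (diam_wrt d (U i)) powr 2))"
    by (subst suminf_finite[of "{..<n}"]) (auto simp: V_def)
  also have "\<dots> \<le> (\<Sum>i<n. ennreal (\<rho>^2))"
  proof (intro sum_mono ennreal_leI)
    fix i assume "i \<in> {..<n}"
    then have "enn2real (diam_wrt d (U i)) \<le> \<rho>"
      using diam[of i] \<open>0 \<le> \<rho>\<close> by (simp add: enn2real_leI)
    then show "enn2real (diam_wrt d (U i)) powr 2 \<le> \<rho>^2" by (simp add: power_mono)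
  qed
  also have "\<dots> = ennreal (real n * \<rho>^2)" by (simp add: ennreal_of_nat_eq_real_of_nat ennreal_mult')
  finally show ?thesis .
qed

lemma interval_split_index:
  fixes a b t :: real and N :: nat
  assumes "a \<le> t" "t \<le> b" "N > 0"
  shows "\<exists>i<N. a + real i * ((b - a) / N) \<le> t \<and> t \<le> a + real i * ((b - a) / N) + (b - a) / N"
proof (cases "a = b")
  case False
  define h where "h = (b - a) / N"
  have h: "h > 0" using False assms unfolding h_def by auto
  define i where "i = min (N - 1) (nat \<lfloor>(t - a) / h\<rfloor>)"
  have "real (nat \<lfloor>(t - a) / h\<rfloor>) \<le> (t - a) / h" using assms(1) h by simp
  then have "real i \<le> (t - a) / h" unfolding i_def by linarith
  then have "a + real i * h \<le> t" using h by (simp add: field_simps)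
  moreover have "t \<le> a + real i * h + h"
  proof (cases "nat \<lfloor>(t - a) / h\<rfloor> \<le> N - 1")
    case True
    then have "(t - a) / h < real i + 1" using assms(1) h unfolding i_def by linarith
    then show ?thesis using h by (simp add: field_simps)
  next
    case False
    then have "real i + 1 = real N" using assms(3) unfolding i_def by simp
    have "a + real i * h + h = a + (real i + 1) * h" by (simp add: algebra_simps)
    also have "\<dots> = b" using \<open>real i + 1 = real N\<close> assms(3) unfolding h_def by simp
    finally show ?thesis using assms(2) by simp
  qed
  moreover have "i < N" using assms(3) unfolding i_def by simp
  ultimately show ?thesis unfolding h_def by blast
qed (use assms in auto)

lemma diam_image_holder_le:
  assumes holder: "\<And>s t. (d (\<gamma> s) (\<gamma> t))^2 \<le> M * \<bar>s - t\<bar>" and "0 \<le> M" "0 \<le> h"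
  shows "diam_wrt d (\<gamma> ` {c..c+h}) \<le> ennreal (sqrt (M * h))"
  unfolding diam_wrt_def
proof (intro SUP_least ennreal_leI)
  fix x y assume "x \<in> \<gamma> ` {c..c+h}" "y \<in> \<gamma> ` {c..c+h}"
  then obtain s t where "x = \<gamma> s" "y = \<gamma> t" "\<bar>s - t\<bar> \<le> h" by auto
  then have "(d x y)^2 \<le> M * h" using holder[of s t] \<open>0 \<le> M\<close> by (smt (verit) mult_left_mono)
  then show "d x y \<le> sqrt (M * h)" using real_le_rsqrt by blast
qed

lemma holder_image_finite_cover:
  fixes N :: nat
  assumes holder: "\<And>s t. (d (\<gamma> s) (\<gamma> t))^2 \<le> M * \<bar>s - t\<bar>" and "0 \<le> M" "a \<le> b" "0 < N"
  shows "\<exists>U. \<gamma> ` {a..b} \<subseteq> (\<Union>i<N. U i) \<and> (\<forall>i. diam_wrt d (U i) \<le> ennreal (sqrt (M * ((b - a) / N))))"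
proof -
  define h where "h = (b - a) / N"
  have "0 \<le> h" using assms(3,4) unfolding h_def by simp
  have "\<gamma> ` {a..b} \<subseteq> (\<Union>i<N. \<gamma> ` {a + real i * h..a + real i * h + h})"
  proof
    fix x assume "x \<in> \<gamma> ` {a..b}"
    then obtain t where t: "t \<in> {a..b}" "x = \<gamma> t" by auto
    then obtain i where "i < N" "t \<in> {a + real i * h..a + real i * h + h}"
      using interval_split_index[of a t b N] assms(4) unfolding h_def by auto
    then show "x \<in> (\<Union>i<N. \<gamma> ` {a + real i * h..a + real i * h + h})" using t(2) by blast
  qed
  moreover have "diam_wrt d (\<gamma> ` {a + real i * h..a + real i * h + h}) \<le> ennreal (sqrt (M * h))" for i
    by (rule diam_image_holder_le[where d = d and \<gamma> = \<gamma>, OF holder \<open>0 \<le> M\<close> \<open>0 \<le> h\<close>])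
  ultimately show ?thesis unfolding h_def by blast
qed

lemma hausdorff_meas_holder_curve_le:
  fixes \<gamma> :: "real \<Rightarrow> 'a"
  assumes holder: "\<And>s t. (d (\<gamma> s) (\<gamma> t))^2 \<le> M * \<bar>s - t\<bar>" and "0 \<le> M"
    and "a1 \<le> b1" "a2 \<le> b2" and A: "A \<subseteq> \<gamma> ` {a1..b1} \<union> \<gamma> ` {a2..b2}"
  shows "hausdorff_meas d 2 A \<le> ennreal (2 * M * ((b1 - a1) + (b2 - a2)))"
  unfolding hausdorff_meas_def
proof (intro SUP_least)
  fix \<delta> :: real assume "\<delta> \<in> {0<..}"
  define N :: nat where "N = nat \<lceil>M * ((b1 - a1) + (b2 - a2)) / \<delta>^2\<rceil> + 1"
  define h1 h2 where "h1 = (b1 - a1) / N" and "h2 = (b2 - a2) / N"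
  define \<rho> where "\<rho> = sqrt (M * (h1 + h2))"
  have N: "N > 0" "M * ((b1 - a1) + (b2 - a2)) / \<delta>^2 \<le> real N" unfolding N_def by linarith+
  have h: "0 \<le> h1" "0 \<le> h2" using assms(3,4) unfolding h1_def h2_def by auto
  have "M * (h1 + h2) = M * ((b1 - a1) + (b2 - a2)) / N" unfolding h1_def h2_def by argo
  also have "\<dots> \<le> \<delta>^2" using N \<open>\<delta> \<in> {0<..}\<close> by (simp add: field_simps)
  finally have \<rho>\<delta>: "\<rho> \<le> \<delta>" unfolding \<rho>_def using \<open>\<delta> \<in> {0<..}\<close> by (simp add: real_le_lsqrt)
  have \<rho>0: "0 \<le> \<rho>" unfolding \<rho>_def using \<open>0 \<le> M\<close> h by simp
  obtain U1 U2 where U1: "\<gamma> ` {a1..b1} \<subseteq> (\<Union>i<N. U1 i)" "\<And>i. diam_wrt d (U1 i) \<le> ennreal (sqrt (M * h1))"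
    and U2: "\<gamma> ` {a2..b2} \<subseteq> (\<Union>i<N. U2 i)" "\<And>i. diam_wrt d (U2 i) \<le> ennreal (sqrt (M * h2))"
    using holder_image_finite_cover[where d = d and \<gamma> = \<gamma>, OF holder \<open>0 \<le> M\<close> assms(3) N(1)]
      holder_image_finite_cover[where d = d and \<gamma> = \<gamma>, OF holder \<open>0 \<le> M\<close> assms(4) N(1)]
    unfolding h1_def h2_def by metis
  define U where "U i = (if i < N then U1 i else U2 (i - N))" for i
  have "sqrt (M * h1) \<le> \<rho>" "sqrt (M * h2) \<le> \<rho>"
    unfolding \<rho>_def using \<open>0 \<le> M\<close> h by (simp_all add: mult_left_mono)
  then have diam: "diam_wrt d (U i) \<le> ennreal \<rho>" for i
    using U1(2)[of i] U2(2)[of "i - N"] unfolding U_def by (auto intro: order_trans ennreal_leI)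
  have "U1 i = U i" "U2 i = U (N + i)" if "i < N" for i using that by (simp_all add: U_def)
  then have "A \<subseteq> (\<Union>i<2 * N. U i)" using A U1(1) U2(1) by fastforce
  then have "hausdorff_pre d 2 \<delta> A \<le> ennreal (real (2 * N) * \<rho>^2)"
    using diam \<rho>0 \<rho>\<delta> by (rule hausdorff_pre_le_finite_cover)
  also have "\<rho>^2 = M * (h1 + h2)" unfolding \<rho>_def using \<open>0 \<le> M\<close> h by simp
  also have "real (2 * N) * (M * (h1 + h2)) = 2 * M * ((b1 - a1) + (b2 - a2))"
    using N unfolding h1_def h2_def by (simp add: field_simps)
  finally show "hausdorff_pre d 2 \<delta> A \<le> ennreal (2 * M * ((b1 - a1) + (b2 - a2)))" .
qed

section \<open>Sublevel sets of first-order trigonometric polynomials\<close>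

lemma sin_ge_quarter: assumes "0 \<le> y" "y \<le> pi / 2" shows "y / 4 \<le> sin y"
proof -
  have c1: "1/2 \<le> cos x" if "0 \<le> x" "x \<le> 1" for x :: real
  proof -
    have "cos (pi / 3) \<le> cos x" using that pi_gt3 by (intro cos_monotone_0_pi_le) auto
    then show ?thesis by (simp add: cos_60)
  qed
  show ?thesis
  proof (cases "y \<le> 1")
    case True
    show ?thesis
    proof (cases "y = 0")
      case False
      then obtain z where "0 < z" "z < y" "sin y - sin 0 = (y - 0) * cos z"
        using MVT2[of 0 y sin cos] assms by (auto intro: DERIV_sin)
      moreover have "y * (1/2) \<le> y * cos z" using c1[of z] calculation True assms by auto
      ultimately show ?thesis using assms by simp
    qed simp
  next
    case False
    have "cos (1::real) \<le> cos (pi/2 - 1)"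
      using pi_gt3 pi_less_4 by (intro cos_monotone_0_pi_le) auto
    then have "cos (1::real) \<le> sin 1" by (simp add: cos_sin_eq)
    moreover have "sin (1::real) \<le> sin y" using False assms pi_gt3 by (subst sin_mono_le_eq) auto
    moreover have "y / 4 \<le> 1/2" using assms pi_less_4 by simp
    ultimately show ?thesis using c1[of 1] by linarith
  qed
qed

text \<open>The square-root modulus of continuity of arccos at the endpoints is what produces the
  exponent 1/2 in the annulus estimate.\<close>

lemma arccos_diff_le_sqrt:
  assumes "-1 \<le> a" "a \<le> b" "b \<le> 1"
  shows "arccos a - arccos b \<le> 6 * sqrt (b - a)"
proof -
  define \<alpha> \<beta> where "\<alpha> = arccos b" and "\<beta> = arccos a"
  have ab: "0 \<le> \<alpha>" "\<alpha> \<le> \<beta>" "\<beta> \<le> pi"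
    unfolding \<alpha>_def \<beta>_def using assms arccos_le_arccos arccos_bounded by auto
  define y m where "y = (\<beta> - \<alpha>) / 2" and "m = (\<alpha> + \<beta>) / 2"
  have y: "0 \<le> y" "y \<le> pi / 2" using ab unfolding y_def by auto
  have "cos \<alpha> = b" "cos \<beta> = a" unfolding \<alpha>_def \<beta>_def using assms by auto
  then have "b - a = 2 * sin m * sin y" unfolding m_def y_def by (metis cos_diff_cos)
  moreover have "sin y \<le> sin m"
  proof (cases "m \<le> pi / 2")
    case True
    then show ?thesis using ab y unfolding m_def y_def by (subst sin_mono_le_eq) auto
  next
    case False
    then have "sin y \<le> sin (pi - m)"
      using ab y unfolding m_def y_def by (subst sin_mono_le_eq) (auto simp: field_simps)
    then show ?thesis by simp
  qed
  moreover have "0 \<le> sin y" using y sin_ge_zero by (simp add: pi_ge_zero)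
  ultimately have "2 * sin y * sin y \<le> b - a" by (simp add: mult_right_mono)
  moreover have "y / 4 * (y / 4) \<le> sin y * sin y" using sin_ge_quarter[OF y] y by (intro mult_mono) auto
  ultimately have "y^2 \<le> 8 * (b - a)" by (simp add: power2_eq_square)
  then have "y \<le> sqrt (8 * (b - a))" by (rule real_le_rsqrt)
  then have "y \<le> sqrt 8 * sqrt (b - a)" by (metis real_sqrt_mult)
  moreover have "sqrt 8 * sqrt (b - a) \<le> 3 * sqrt (b - a)"
    using assms(2) by (intro mult_right_mono real_le_lsqrt) auto
  ultimately have "y \<le> 3 * sqrt (b - a)" by linarith
  then show ?thesis unfolding y_def \<alpha>_def \<beta>_def by simp
qed

lemma cos_band_cover:
  fixes \<theta> c1 c2 :: real
  assumes "c1 \<le> cos \<theta>" "cos \<theta> \<le> c2"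
  defines "\<alpha> \<equiv> arccos (min 1 c2)" and "\<beta> \<equiv> arccos (max (-1) c1)"
  shows "\<exists>n\<in>\<int>. \<theta> - 2 * n * pi \<in> {\<alpha>..\<beta>} \<union> {-\<beta>..-\<alpha>}" and "\<alpha> \<le> \<beta>"
    and "\<beta> - \<alpha> \<le> 6 * sqrt (c2 - c1)"
proof -
  define t where "t = arccos (cos \<theta>)"
  obtain n where n: "n \<in> \<int>" "\<theta> = t + 2 * n * pi \<or> \<theta> = - t + 2 * n * pi"
    using cos_eq[of \<theta> t] unfolding t_def by auto
  have "\<alpha> \<le> t" "t \<le> \<beta>" unfolding \<alpha>_def \<beta>_def t_def using assms(1,2) by (auto intro: arccos_le_arccos)
  then show "\<exists>n\<in>\<int>. \<theta> - 2 * n * pi \<in> {\<alpha>..\<beta>} \<union> {-\<beta>..-\<alpha>}" "\<alpha> \<le> \<beta>"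
    using n by (auto intro!: bexI[of _ n])
  have "c1 \<le> 1" "-1 \<le> c2" "c1 \<le> c2" using assms(1,2) cos_le_one[of \<theta>] cos_ge_minus_one[of \<theta>] by linarith+
  then have "\<beta> - \<alpha> \<le> 6 * sqrt (min 1 c2 - max (-1) c1)" unfolding \<alpha>_def \<beta>_def
    by (intro arccos_diff_le_sqrt) auto
  also have "\<dots> \<le> 6 * sqrt (c2 - c1)" by simp
  finally show "\<beta> - \<alpha> \<le> 6 * sqrt (c2 - c1)" .
qed

lemma Re_mult_cis: "Re (Z * cis t) = cmod Z * cos (t + Arg Z)"
proof (cases "Z = 0")
  case False
  then have "Z = of_real (cmod Z) * cis (Arg Z)"
    using cis_Arg[OF False] by (simp add: sgn_div_norm scaleR_conv_of_real)
  then have "Z * cis t = of_real (cmod Z) * cis (t + Arg Z)" by (metis cis_mult mult.assoc add.commute)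
  then show ?thesis by simp
qed simp

lemma trig_band_cover:
  assumes "Z \<noteq> 0" "0 \<le> B"
  shows "\<exists>\<alpha> \<beta>. \<alpha> \<le> \<beta> \<and> \<beta> - \<alpha> \<le> 6 * sqrt (B / (2 * cmod Z)) \<and>
    (\<forall>t. 0 \<le> A + 2 * Re (Z * cis t) \<and> A + 2 * Re (Z * cis t) \<le> B \<longrightarrow>
       (\<exists>n\<in>\<int>. t + Arg Z - 2 * n * pi \<in> {\<alpha>..\<beta>} \<union> {-\<beta>..-\<alpha>}))"
proof (cases "\<exists>t. 0 \<le> A + 2 * Re (Z * cis t) \<and> A + 2 * Re (Z * cis t) \<le> B")
  case True
  define c1 c2 where "c1 = - A / (2 * cmod Z)" and "c2 = (B - A) / (2 * cmod Z)"
  have band: "c1 \<le> cos (t + Arg Z) \<and> cos (t + Arg Z) \<le> c2"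
    if "0 \<le> A + 2 * Re (Z * cis t)" "A + 2 * Re (Z * cis t) \<le> B" for t
    using that assms(1) unfolding c1_def c2_def Re_mult_cis by (simp add: field_simps)
  obtain t0 where t0: "c1 \<le> cos (t0 + Arg Z)" "cos (t0 + Arg Z) \<le> c2" using True band by blast
  have "c2 - c1 = B / (2 * cmod Z)" unfolding c1_def c2_def by (simp add: diff_divide_distrib)
  then show ?thesis
    using cos_band_cover(2,3)[OF t0] band cos_band_cover(1)
    by (intro exI[of _ "arccos (min 1 c2)"] exI[of _ "arccos (max (-1) c1)"]) auto
next
  case False
  then show ?thesis using assms(2) by (intro exI[of _ 0]) auto
qed

section \<open>A chain seen from a null vector\<close>

lemma cmod_add_mult_sq:
  "(cmod (p + c * q))^2 = (cmod p)^2 + (cmod q)^2 * (cmod c)^2 + 2 * Re (p * cnj q * cnj c)"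
proof -
  have "complex_of_real ((cmod (p + c * q))^2)
      = p * cnj p + (q * cnj q) * (c * cnj c) + (p * cnj q * cnj c + cnj (p * cnj q * cnj c))"
    unfolding complex_norm_square by (simp add: algebra_simps)
  also have "\<dots> = complex_of_real ((cmod p)^2 + (cmod q)^2 * (cmod c)^2 + 2 * Re (p * cnj q * cnj c))"
    unfolding complex_add_cnj by (simp add: complex_norm_square[symmetric] del: of_real_power)
  finally show ?thesis using of_real_eq_iff by blast
qed

lemma quartic_increment_le:
  fixes r d :: real assumes "0 \<le> d" "d \<le> r" "r \<le> 1"
  shows "(r + d)^4 - r^4 \<le> 15 * d"
proof -
  have "(r + d)^4 - r^4 = d * (4 * r^3 + 6 * r^2 * d + 4 * r * d^2 + d^3)"
    by (simp add: power2_eq_square power3_eq_cube power4_eq_xxxx algebra_simps)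
  moreover have "r^3 \<le> 1" "r^2 * d \<le> 1" "r * d^2 \<le> 1" "d^3 \<le> 1"
    using assms by (simp_all add: power_le_one mult_le_one)
  then have "4 * r^3 + 6 * r^2 * d + 4 * r * d^2 + d^3 \<le> 15" by linarith
  ultimately show ?thesis using assms(1) by (simp add: mult_left_mono mult.commute)
qed

lemma sqrt_ratio_bounds:
  fixes r R N H :: real
  assumes "0 < r" "0 < N" "0 \<le> H" "r \<le> sqrt (H / N)" "sqrt (H / N) \<le> R"
  shows "r^2 * N \<le> H" "H \<le> R^2 * N"
proof -
  have HN: "0 \<le> H / N" using assms(2,3) by (rule divide_nonneg_pos[rotated])
  moreover have "r^2 \<le> (sqrt (H / N))^2" using assms(1) by (intro power_mono[OF assms(4)]) simp
  moreover have "(sqrt (H / N))^2 \<le> R^2" using HN by (intro power_mono[OF assms(5)]) simp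
  ultimately have "r^2 \<le> H / N" "H / N \<le> R^2" by simp_all
  then show "r^2 * N \<le> H" "H \<le> R^2 * N" using assms(2) by (simp_all add: field_simps)
qed

lemma band_width_le:
  fixes c z r \<delta> :: real
  assumes "1 \<le> c" "0 < \<delta>" "\<delta> \<le> r" "r \<le> 1" "1 / (36 * c^2) \<le> z"
  shows "6 * sqrt (((r + \<delta>)^4 - r^4) * (c + 1)^2 / (2 * z)) \<le> 200 * c^2 * sqrt \<delta>"
proof -
  have z: "0 < z" using assms(5) by (smt (verit) assms(1) divide_pos_pos zero_less_power)
  define B where "B = ((r + \<delta>)^4 - r^4) * (c + 1)^2"
  have "(c + 1)^2 \<le> (2 * c)^2" using assms(1) by (intro power_mono) auto
  then have c2: "(c + 1)^2 \<le> 4 * c^2" by (simp add: power_mult_distrib)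
  have mono: "r^4 \<le> (r + \<delta>)^4" using assms(2,3) by (intro power_mono) auto
  have "(r + \<delta>)^4 - r^4 \<le> 15 * \<delta>" using assms(2-4) by (intro quartic_increment_le) auto
  then have B: "0 \<le> B" "B \<le> (15 * \<delta>) * (4 * c^2)"
    unfolding B_def using mono assms(2) by (simp, intro mult_mono[OF _ c2]) auto
  have iz: "0 \<le> 1 / (2 * z)" "1 / (2 * z) \<le> 18 * c^2"
    using assms(1,5) z by (simp_all add: field_simps)
  have "((r + \<delta>)^4 - r^4) * (c + 1)^2 / (2 * z) = B * (1 / (2 * z))" unfolding B_def by simp
  also have "\<dots> \<le> (60 * c^2 * \<delta>) * (18 * c^2)"
    using B iz assms(2) by (intro mult_mono) (auto simp: mult_ac)
  also have "\<dots> = 1080 * (c^2)^2 * \<delta>" by (simp add: power2_eq_square)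
  also have "\<dots> = (sqrt 1080 * c^2 * sqrt \<delta>)^2" using assms(2) by (simp add: power_mult_distrib)
  finally have "sqrt (((r + \<delta>)^4 - r^4) * (c + 1)^2 / (2 * z)) \<le> sqrt 1080 * c^2 * sqrt \<delta>"
    using assms(2) by (intro real_le_lsqrt) auto
  then have "6 * sqrt (((r + \<delta>)^4 - r^4) * (c + 1)^2 / (2 * z)) \<le> (6 * sqrt 1080) * (c^2 * sqrt \<delta>)"
    by (simp add: mult_ac)
  also have "\<dots> \<le> 200 * (c^2 * sqrt \<delta>)"
    using real_le_lsqrt[of "100 / 3" 1080] assms(2) by (intro mult_right_mono) (auto simp: power2_eq_square)
  finally show ?thesis by (simp add: mult_ac)
qed

locale null_vector_and_chain =
  fixes w x :: cvec
  assumes qneg_pos: "0 < qneg w" and norm_x: "norm x = 1" and null_x: "herm x x = 0"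
begin

abbreviation "p \<equiv> herm x (e1 w)"
abbreviation "q \<equiv> herm x (e2 w)"
abbreviation "ne \<equiv> norm (e1 w)"

text \<open>Along the chain, |<x, c(t)>|^2 - r^4 |c(t)|^2 = band_A r + 2 Re (band_Z r * cis t) is a
  trigonometric polynomial of degree one; the annulus condition confines it to a short band.\<close>

abbreviation "band_Z r \<equiv> p * cnj q - of_real (r^4) * cnj (herm_std (e1 w) (e2 w))"
abbreviation "band_A r \<equiv> (cmod p)^2 + (cmod q)^2 - r^4 * (ne^2 + 1)"

lemma ne_ge_1: "1 \<le> ne"
  by (rule norm_e1_ge_1[OF qneg_pos])

lemma null_coeffs: "cmod q \<le> cmod p" "1 \<le> 3 * ne * cmod p"
proof -
  define a where "a = herm x (e3 w)"
  have "complex_of_real ((cmod p)^2 - (cmod q)^2 - (cmod a)^2) = 0"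
    using frame_parseval[OF qneg_pos, of x] null_x unfolding a_def
    by (simp add: complex_norm_square del: of_real_power)
  then have "(cmod p)^2 - (cmod q)^2 - (cmod a)^2 = 0" by (simp only: of_real_eq_0_iff)
  then have pqa: "(cmod p)^2 = (cmod q)^2 + (cmod a)^2" by simp
  have "(cmod q)^2 \<le> (cmod p)^2" "(cmod a)^2 \<le> (cmod p)^2" using pqa by simp_all
  then have qp: "cmod q \<le> cmod p" and ap: "cmod a \<le> cmod p" by (auto elim: power2_le_imp_le)
  show "cmod q \<le> cmod p" by (rule qp)
  have "(norm (e3 w))^2 = ne^2" using norm_e3_sq[OF qneg_pos] norm_e1_sq[OF qneg_pos] by simp
  then have ne3: "norm (e3 w) = ne" by (simp add: power2_eq_iff_nonneg)
  have "1 = norm (p *s e1 w - q *s e2 w - a *s e3 w)"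
    using frame_decomposition[OF qneg_pos, of x] norm_x unfolding a_def by simp
  also have "\<dots> \<le> cmod p * ne + cmod q + cmod a * ne"
    using norm_triangle_ineq4[of "p *s e1 w - q *s e2 w" "a *s e3 w"]
      norm_triangle_ineq4[of "p *s e1 w" "q *s e2 w"]
    by (simp add: norm_smult_cvec norm_e2[OF qneg_pos] ne3)
  also have "\<dots> \<le> 3 * ne * cmod p"
    using qp mult_right_mono[OF ap, of ne] mult_left_mono[OF ne_ge_1, of "cmod p"]
    by (simp add: mult.commute)
  finally show "1 \<le> 3 * ne * cmod p" .
qed

lemma herm_x_chain_curve: "herm x (chain_curve w t) = p + cnj (cis t) * q"
  unfolding chain_curve_def herm_sesquilinear ..

lemma annulus_band:
  assumes "0 < r" "r \<le> dvis_vec x (chain_curve w t)" "dvis_vec x (chain_curve w t) \<le> R"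
  shows "0 \<le> band_A r + 2 * Re (band_Z r * cis t)"
    and "band_A r + 2 * Re (band_Z r * cis t) \<le> (R^4 - r^4) * (ne + 1)^2"
proof -
  define H N where "H = cmod (herm x (chain_curve w t))" and "N = norm (chain_curve w t)"
  have N: "0 < N" "N \<le> ne + 1"
    using chain_curve_nonzero[OF qneg_pos] norm_chain_curve_le[OF qneg_pos] by (auto simp: N_def)
  have "r^2 * N \<le> H" "H \<le> R^2 * N"
    using sqrt_ratio_bounds[of r N H R] assms N unfolding H_def N_def dvis_vec_def norm_x by auto
  moreover have "0 \<le> H" unfolding H_def by simp
  ultimately have "(r^2 * N)^2 \<le> H^2" "H^2 \<le> (R^2 * N)^2"
    using assms(1) N by (auto intro: power_mono)
  then have HN: "r^4 * N^2 \<le> H^2" "H^2 \<le> R^4 * N^2"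
    by (simp_all add: power_mult_distrib flip: power_mult)
  have "H^2 = (cmod p)^2 + (cmod q)^2 + 2 * Re (p * cnj q * cis t)"
    unfolding H_def herm_x_chain_curve cmod_add_mult_sq by simp
  moreover have "N^2 = ne^2 + 1 + 2 * Re (cnj (herm_std (e1 w) (e2 w)) * cis t)"
    unfolding N_def by (rule norm_chain_curve_sq[OF qneg_pos])
  ultimately have expand: "H^2 - r^4 * N^2 = band_A r + 2 * Re (band_Z r * cis t)"
    by (simp add: algebra_simps)
  then show "0 \<le> band_A r + 2 * Re (band_Z r * cis t)" using HN by simp
  have "r^4 \<le> R^4" using assms by (intro power_mono) auto
  then have "(R^4 - r^4) * N^2 \<le> (R^4 - r^4) * (ne + 1)^2"
    using N by (intro mult_left_mono power_mono) auto
  then show "band_A r + 2 * Re (band_Z r * cis t) \<le> (R^4 - r^4) * (ne + 1)^2"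
    using expand HN by (simp add: algebra_simps)
qed

text \<open>A chain point close to x forces |q| to be comparable with |p|; this keeps band_Z r away
  from 0, so the band is thin in the parameter t.\<close>

lemma coeff_product_lower_bound:
  assumes "0 \<le> r" "r * ne \<le> 1/7" "cmod (p + cnj (cis t0) * q) \<le> 8 * r^2 * ne"
  shows "1 / (18 * ne^2) \<le> cmod p * cmod q"
proof -
  have "(r * ne)^2 \<le> (1/7)^2" using assms(1,2) by (intro power_mono) auto
  then have "8 * r^2 * ne * (6 * ne) \<le> 1" by (simp add: power2_eq_square algebra_simps)
  moreover have "0 < 6 * ne" using ne_ge_1 by linarith
  ultimately have "8 * r^2 * ne \<le> 1 / (6 * ne)" by (simp only: pos_le_divide_eq)
  also have "\<dots> \<le> cmod p / 2"
  proof -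
    have "0 < 3 * ne" using ne_ge_1 by linarith
    moreover have "1 \<le> cmod p * (3 * ne)" using null_coeffs(2) by (simp add: mult_ac)
    ultimately have "1 / (3 * ne) \<le> cmod p" by (simp only: pos_divide_le_eq)
    then show ?thesis by simp
  qed
  finally have "cmod p - cmod q \<le> cmod p / 2"
    using assms(3) norm_diff_ineq[of p "cnj (cis t0) * q"] by (simp add: norm_mult)
  then have "cmod p * (cmod p / 2) \<le> cmod p * cmod q" by (intro mult_left_mono) auto
  moreover have "1 / (9 * ne^2) \<le> (cmod p)^2"
  proof -
    have "0 < ne" using ne_ge_1 by linarith
    then have "0 < 9 * ne^2" by simp
    moreover have "1 \<le> (cmod p)^2 * (9 * ne^2)"
      using one_le_power[OF null_coeffs(2), of 2] by (simp add: power_mult_distrib mult_ac)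
    ultimately show ?thesis by (simp only: pos_divide_le_eq)
  qed
  ultimately show ?thesis by (simp add: power2_eq_square)
qed

lemma band_Z_lower_bound:
  assumes "0 \<le> r" "r \<le> 1" "r * ne \<le> 1/7" "1 / (18 * ne^2) \<le> cmod p * cmod q"
  shows "1 / (36 * ne^2) \<le> cmod (band_Z r)"
proof -
  have "cmod (herm_std (e1 w) (e2 w)) \<le> ne"
    using norm_herm_std_le[of "e1 w" "e2 w"] by (simp add: norm_e2[OF qneg_pos])
  then have "r^4 * cmod (herm_std (e1 w) (e2 w)) \<le> r^4 * ne" by (simp add: mult_left_mono)
  also have "\<dots> = (r * ne)^3 * r / ne^2"
    using ne_ge_1 by (simp add: field_simps power3_eq_cube power4_eq_xxxx power2_eq_square)
  also have "\<dots> \<le> (1/7)^3 * 1 / ne^2"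
    using assms(1-3) by (intro divide_right_mono mult_mono power_mono) auto
  also have "\<dots> \<le> (1/36) / ne^2" by (intro divide_right_mono) (auto simp: power3_eq_cube)
  finally have "cmod (of_real (r^4) * cnj (herm_std (e1 w) (e2 w))) \<le> 1 / (36 * ne^2)"
    using assms(1) by (simp add: norm_mult norm_power)
  then show ?thesis
    using assms(4) norm_triangle_ineq2[of "p * cnj q" "of_real (r^4) * cnj (herm_std (e1 w) (e2 w))"]
    by (simp add: norm_mult)
qed

lemma near_point_bound:
  assumes "0 < r" "r \<le> dvis_vec x (chain_curve w t)" "dvis_vec x (chain_curve w t) \<le> 2 * r"
  shows "cmod (p + cnj (cis t) * q) \<le> 8 * r^2 * ne"
proof -
  have N: "0 < norm (chain_curve w t)" "norm (chain_curve w t) \<le> ne + 1"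
    using chain_curve_nonzero[OF qneg_pos] norm_chain_curve_le[OF qneg_pos] by auto
  have "cmod (p + cnj (cis t) * q) \<le> (2 * r)^2 * norm (chain_curve w t)"
    using sqrt_ratio_bounds(2)[of r "norm (chain_curve w t)" "cmod (p + cnj (cis t) * q)" "2 * r"] assms N
    unfolding dvis_vec_def norm_x herm_x_chain_curve by simp
  also have "\<dots> \<le> (2 * r)^2 * (2 * ne)" using N ne_ge_1 by (intro mult_left_mono) auto
  finally show ?thesis by (simp add: power_mult_distrib)
qed

lemma small_radius:
  assumes "0 \<le> r" "r \<le> 1 / (7 * ne^2)"
  shows "r \<le> 1" "r * ne \<le> 1 / 7"
proof -
  have ne2: "1 \<le> ne^2" "ne \<le> ne^2"
    using ne_ge_1 mult_left_mono[OF ne_ge_1, of ne] by (simp_all add: one_le_power power2_eq_square)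
  then have "0 < 7 * ne^2" by linarith
  then have "r * (7 * ne^2) \<le> 1" using assms(2) by (simp only: pos_le_divide_eq)
  then show "r \<le> 1" "r * ne \<le> 1 / 7"
    using assms(1) ne2 mult_left_mono[OF ne2(2), of r] mult_left_mono[OF ne2(1), of r] by linarith+
qed

abbreviation "annulus_params r \<delta> \<equiv>
  {t. r \<le> dvis_vec x (chain_curve w t) \<and> dvis_vec x (chain_curve w t) \<le> r + \<delta>}"

lemma annulus_params_cover:
  assumes "0 < \<delta>" "\<delta> \<le> r" "r \<le> 1 / (7 * ne^2)"
  shows "\<exists>c a b. a \<le> b \<and> b - a \<le> 200 * ne^2 * sqrt \<delta> \<and>
    (\<forall>t \<in> annulus_params r \<delta>. \<exists>n\<in>\<int>. t - 2 * n * pi \<in> {c + a..c + b} \<union> {c - b..c - a})"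
proof (cases "annulus_params r \<delta> = {}")
  case True
  show ?thesis unfolding True using assms(1) by (intro exI[of _ 0]) simp
next
  case False
  then obtain t0 where t0: "t0 \<in> annulus_params r \<delta>" by blast
  have r: "0 < r" "r \<le> 1" "r * ne \<le> 1 / 7" using assms small_radius[of r] by auto
  have "cmod (p + cnj (cis t0) * q) \<le> 8 * r^2 * ne"
    using t0 assms(2) r(1) by (intro near_point_bound) auto
  then have Z: "1 / (36 * ne^2) \<le> cmod (band_Z r)"
    using band_Z_lower_bound[OF _ r(2,3) coeff_product_lower_bound[OF _ r(3)]] r(1) by simp
  have "0 < ne" using ne_ge_1 by linarith
  then have "0 < 1 / (36 * ne^2)" by simp
  then have "band_Z r \<noteq> 0" using Z by auto
  moreover have "0 \<le> ((r + \<delta>)^4 - r^4) * (ne + 1)^2" using assms(1) r(1) by (simp add: power_mono)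
  ultimately obtain \<alpha> \<beta> where "\<alpha> \<le> \<beta>"
    and width: "\<beta> - \<alpha> \<le> 6 * sqrt (((r + \<delta>)^4 - r^4) * (ne + 1)^2 / (2 * cmod (band_Z r)))"
    and cover: "\<forall>t. 0 \<le> band_A r + 2 * Re (band_Z r * cis t) \<and>
      band_A r + 2 * Re (band_Z r * cis t) \<le> ((r + \<delta>)^4 - r^4) * (ne + 1)^2 \<longrightarrow>
      (\<exists>n\<in>\<int>. t + Arg (band_Z r) - 2 * n * pi \<in> {\<alpha>..\<beta>} \<union> {-\<beta>..-\<alpha>})"
    by (blast dest: trig_band_cover[where A = "band_A r"])
  have "\<exists>n\<in>\<int>. t - 2 * n * pi \<in> {- Arg (band_Z r) + \<alpha>..- Arg (band_Z r) + \<beta>}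
      \<union> {- Arg (band_Z r) - \<beta>..- Arg (band_Z r) - \<alpha>}" if "t \<in> annulus_params r \<delta>" for t
  proof -
    from that have "r \<le> dvis_vec x (chain_curve w t)" "dvis_vec x (chain_curve w t) \<le> r + \<delta>"
      by auto
    from annulus_band[OF r(1) this]
    have "0 \<le> band_A r + 2 * Re (band_Z r * cis t) \<and>
      band_A r + 2 * Re (band_Z r * cis t) \<le> ((r + \<delta>)^4 - r^4) * (ne + 1)^2" ..
    then obtain n where "n \<in> \<int>" "t + Arg (band_Z r) - 2 * n * pi \<in> {\<alpha>..\<beta>} \<union> {-\<beta>..-\<alpha>}"
      using cover by blast
    then show ?thesis by (intro bexI[of _ n]) auto
  qed
  moreover have "\<beta> - \<alpha> \<le> 200 * ne^2 * sqrt \<delta>"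
    using width band_width_le[OF ne_ge_1 assms(1,2) r(2) Z] by linarith
  ultimately show ?thesis using \<open>\<alpha> \<le> \<beta>\<close>
    by (intro exI[of _ "- Arg (band_Z r)"] exI[of _ \<alpha>] exI[of _ \<beta>]) blast
qed

lemma hausdorff_annulus_le:
  assumes "0 < \<delta>" "\<delta> \<le> r" "r \<le> 1 / (7 * ne^2)"
    and A: "A \<subseteq> (\<lambda>t. line (chain_curve w t)) ` annulus_params r \<delta>"
  shows "hausdorff_meas dvis 2 A \<le> ennreal (800 * ne^4 * sqrt \<delta>)"
proof -
  define \<gamma> where "\<gamma> t = line (chain_curve w t)" for t
  have holder: "(dvis (\<gamma> s) (\<gamma> t))^2 \<le> ne^2 * \<bar>s - t\<bar>" for s t
    unfolding \<gamma>_def dvis_line[OF chain_curve_nonzero[OF qneg_pos] chain_curve_nonzero[OF qneg_pos]]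
    by (rule chain_curve_holder[OF qneg_pos])
  obtain c a b where ab: "a \<le> b" "b - a \<le> 200 * ne^2 * sqrt \<delta>"
    and cover: "\<And>t. t \<in> annulus_params r \<delta> \<Longrightarrow> \<exists>n\<in>\<int>. t - 2 * n * pi \<in> {c + a..c + b} \<union> {c - b..c - a}"
    using annulus_params_cover[OF assms(1-3)] by blast
  have "A \<subseteq> \<gamma> ` {c + a..c + b} \<union> \<gamma> ` {c - b..c - a}"
  proof
    fix P assume "P \<in> A"
    then obtain t where t: "t \<in> annulus_params r \<delta>" "P = \<gamma> t" using A unfolding \<gamma>_def by blast
    then obtain n where "n \<in> \<int>" "t - 2 * n * pi \<in> {c + a..c + b} \<union> {c - b..c - a}" using cover by blast
    moreover have "\<gamma> (t - 2 * n * pi) = P"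
      using chain_curve_periodic[OF qneg_pos \<open>n \<in> \<int>\<close>] t(2) unfolding \<gamma>_def by simp
    ultimately show "P \<in> \<gamma> ` {c + a..c + b} \<union> \<gamma> ` {c - b..c - a}" by (metis UnE UnI1 UnI2 image_eqI)
  qed
  then have "hausdorff_meas dvis 2 A \<le> ennreal (2 * ne^2 * ((c + b - (c + a)) + (c - a - (c - b))))"
    using ab by (intro hausdorff_meas_holder_curve_le[where d = dvis and \<gamma> = \<gamma>, OF holder]) auto
  moreover have "2 * ne^2 * ((c + b - (c + a)) + (c - a - (c - b))) \<le> 800 * ne^4 * sqrt \<delta>"
  proof -
    have "2 * ne^2 * ((c + b - (c + a)) + (c - a - (c - b))) = (4 * ne^2) * (b - a)" by simp
    also have "\<dots> \<le> (4 * ne^2) * (200 * ne^2 * sqrt \<delta>)" using ab by (intro mult_left_mono) auto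
    also have "\<dots> = 800 * ne^4 * sqrt \<delta>" by (simp add: power2_eq_square power4_eq_xxxx)
    finally show ?thesis .
  qed
  ultimately show ?thesis by (blast intro: order_trans ennreal_leI)
qed

end

section \<open>The metric d_E and compact families of chains\<close>

text \<open>d_E is the chordal distance of the rank-one projections u u^*/|u|^2 in the
  Hilbert-Schmidt norm, scaled by 1/sqrt 2; this makes the metric axioms evident.\<close>

definition proj_matrix :: "cvec \<Rightarrow> complex^3^3" where
  "proj_matrix a = (\<chi> i j. a$i * cnj (a$j))"

lemma norm_proj_matrix_diff_sq:
  "(norm (proj_matrix a - proj_matrix b))^2 = (norm a)^4 + (norm b)^4 - 2 * (cmod (herm_std a b))^2"
proof -
  have sq: "(norm (M::complex^3^3))^2 = (norm (M$0))^2 + (norm (M$1))^2 + (norm (M$2))^2" for M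
    by (simp add: norm_vec_def L2_set_def sum_UNIV_3)
  have "complex_of_real ((norm (proj_matrix a - proj_matrix b))^2)
      = (herm_std a a)^2 + (herm_std b b)^2 - 2 * (herm_std a b * cnj (herm_std a b))"
    unfolding sq norm_cvec_sq of_real_add complex_norm_square
    by (simp add: proj_matrix_def herm_std_def algebra_simps power2_eq_square)
  also have "\<dots> = complex_of_real ((norm a)^4 + (norm b)^4 - 2 * (cmod (herm_std a b))^2)"
    unfolding herm_std_self by (simp add: complex_norm_square del: of_real_power flip: of_real_power)
  finally show ?thesis using of_real_eq_iff by blast
qed

lemma proj_matrix_eq_imp_parallel:
  assumes "proj_matrix a = proj_matrix b" "norm b = 1"
  shows "b = cnj (herm_std a b) *s a"
proof -
  have bb: "b$0 * cnj (b$0) + b$1 * cnj (b$1) + b$2 * cnj (b$2) = 1"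
    using herm_std_self[of b] assms(2) unfolding herm_std_def by simp
  have e: "a$i * cnj (a$j) = b$i * cnj (b$j)" for i j
    using arg_cong[OF assms(1), of "\<lambda>M. M$i$j"] unfolding proj_matrix_def by simp
  have "b$i = cnj (herm_std a b) * a$i" for i
  proof -
    have "b$i = b$i * (b$0 * cnj (b$0) + b$1 * cnj (b$1) + b$2 * cnj (b$2))" using bb by simp
    also have "\<dots> = (b$i * cnj (b$0)) * b$0 + (b$i * cnj (b$1)) * b$1 + (b$i * cnj (b$2)) * b$2"
      by (simp add: algebra_simps)
    also have "\<dots> = cnj (herm_std a b) * a$i"
      unfolding e[symmetric] herm_std_def by (simp add: algebra_simps)
    finally show ?thesis .
  qed
  then show ?thesis unfolding vec_eq_iff by simp
qed

lemma herm_std_unit_rep: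
  assumes "P \<in> ProjPlane" "Q \<in> ProjPlane"
  shows "cmod (herm_std (unit_rep P) (unit_rep Q)) = cmod (herm_std (rep P) (rep Q)) / (norm (rep P) * norm (rep Q))"
  using rep_nonzero[OF assms(1)] rep_nonzero[OF assms(2)]
  by (simp add: unit_rep_def herm_std_sesquilinear norm_mult del: of_real_divide)

lemma dE_nonneg: "0 \<le> dE P Q"
  unfolding dE_def wedge_norm_def
  using power_mono[OF norm_herm_std_le[of "rep P" "rep Q"]] by (simp add: power_mult_distrib)

lemma dE_eq_proj_matrix:
  assumes "P \<in> ProjPlane" "Q \<in> ProjPlane"
  shows "dE P Q = norm (proj_matrix (unit_rep P) - proj_matrix (unit_rep Q)) / sqrt 2"
proof -
  define u v where "u = rep P" and "v = rep Q"
  have uv: "0 < norm u" "0 < norm v" using rep_nonzero assms unfolding u_def v_def by auto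
  define t where "t = cmod (herm_std u v) / (norm u * norm v)"
  have cs: "(cmod (herm_std u v))^2 \<le> (norm u)^2 * (norm v)^2"
    using power_mono[OF norm_herm_std_le[of u v]] by (simp add: power_mult_distrib)
  have "(dE P Q)^2 = ((norm u)^2 * (norm v)^2 - (cmod (herm_std u v))^2) / (norm u * norm v)^2"
    using cs by (simp add: dE_def wedge_norm_def u_def v_def power_divide)
  also have "\<dots> = 1 - t^2" unfolding t_def using uv by (simp add: field_simps power2_eq_square)
  also have "\<dots> = (norm (proj_matrix (unit_rep P) - proj_matrix (unit_rep Q)) / sqrt 2)^2"
    unfolding power_divide norm_proj_matrix_diff_sq herm_std_unit_rep[OF assms] norm_unit_rep[OF assms(1)]
      norm_unit_rep[OF assms(2)]
    by (simp add: t_def u_def v_def power_divide)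
  finally have "(dE P Q)^2 = (norm (proj_matrix (unit_rep P) - proj_matrix (unit_rep Q)) / sqrt 2)^2" .
  then show ?thesis using dE_nonneg by (simp add: power2_eq_iff_nonneg)
qed

lemma dE_metric: "Metric_space ProjPlane dE"
proof
  fix x y
  show "0 \<le> dE x y" by (rule dE_nonneg)
  show "dE x y = dE y x"
    unfolding dE_def wedge_norm_def using herm_std_commute[of "rep x" "rep y"] by (simp add: mult.commute)
next
  fix x y assume xy: "x \<in> ProjPlane" "y \<in> ProjPlane"
  show "dE x y = 0 \<longleftrightarrow> x = y"
  proof
    assume "dE x y = 0"
    then have "proj_matrix (unit_rep x) = proj_matrix (unit_rep y)" using dE_eq_proj_matrix[OF xy] by simp
    then have par: "unit_rep y = cnj (herm_std (unit_rep x) (unit_rep y)) *s unit_rep x"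
      using proj_matrix_eq_imp_parallel norm_unit_rep[OF xy(2)] by blast
    then have "cnj (herm_std (unit_rep x) (unit_rep y)) \<noteq> 0" using norm_unit_rep[OF xy(2)] by auto
    then show "x = y" using par line_unit_rep[OF xy(1)] line_unit_rep[OF xy(2)] line_smult by metis
  qed (use xy in \<open>simp add: dE_eq_proj_matrix\<close>)
next
  fix x y z assume xyz: "x \<in> ProjPlane" "y \<in> ProjPlane" "z \<in> ProjPlane"
  show "dE x z \<le> dE x y + dE y z"
    unfolding dE_eq_proj_matrix[OF xyz(1,3)] dE_eq_proj_matrix[OF xyz(1,2)] dE_eq_proj_matrix[OF xyz(2,3)]
    using norm_triangle_ineq[of "proj_matrix (unit_rep x) - proj_matrix (unit_rep y)"
        "proj_matrix (unit_rep y) - proj_matrix (unit_rep z)"]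
    by (simp add: add_divide_distrib[symmetric] divide_right_mono)
qed

definition kappa :: "cvec set \<Rightarrow> real" where
  "kappa P = qneg (rep P) / (norm (rep P))^2"

lemma kappa_eq_qneg_unit_rep: "P \<in> ProjPlane \<Longrightarrow> kappa P = qneg (unit_rep P)"
  by (simp add: kappa_def unit_rep_def qneg_smult power_divide del: of_real_divide)

lemma kappa_pos: "L \<in> LC \<Longrightarrow> 0 < kappa L"
proof -
  assume "L \<in> LC"
  then have "0 < qneg (rep L)" "rep L \<noteq> 0" using rep_nonzero by (auto simp: LC_def qneg_def)
  then show ?thesis unfolding kappa_def by (simp add: divide_pos_pos)
qed

lemma kappa_lipschitz:
  assumes "P \<in> ProjPlane" "Q \<in> ProjPlane"
  shows "\<bar>kappa P - kappa Q\<bar> \<le> 3 * sqrt 2 * dE P Q"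
proof -
  define D where "D = proj_matrix (unit_rep P) - proj_matrix (unit_rep Q)"
  have "kappa P - kappa Q = - Re (D$0$0 - D$1$1 - D$2$2)"
    unfolding kappa_eq_qneg_unit_rep[OF assms(1)] kappa_eq_qneg_unit_rep[OF assms(2)] D_def
    by (simp add: qneg_def qform_def herm_def proj_matrix_def)
  also have "\<bar>\<dots>\<bar> \<le> cmod (D$0$0) + cmod (D$1$1) + cmod (D$2$2)"
    by (smt (verit) abs_Re_le_cmod norm_triangle_ineq4 minus_complex.sel)
  also have "\<dots> \<le> 3 * norm D"
    using Finite_Cartesian_Product.norm_nth_le[of "D$_"] Finite_Cartesian_Product.norm_nth_le[of D]
    by (smt (verit))
  also have "norm D = sqrt 2 * dE P Q" unfolding D_def dE_eq_proj_matrix[OF assms] by simp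
  finally show ?thesis by simp
qed

lemma continuous_map_kappa: "continuous_map (Metric_space.mtopology ProjPlane dE) euclideanreal kappa"
proof -
  have "\<exists>\<rho>>0. \<forall>Q. Q \<in> ProjPlane \<and> dE P Q < \<rho> \<longrightarrow> dist (kappa P) (kappa Q) < \<epsilon>"
    if "P \<in> ProjPlane" "0 < \<epsilon>" for P \<epsilon>
  proof (intro exI conjI allI impI)
    show "0 < \<epsilon> / (3 * sqrt 2)" using that by simp
    fix Q assume "Q \<in> ProjPlane \<and> dE P Q < \<epsilon> / (3 * sqrt 2)"
    then show "dist (kappa P) (kappa Q) < \<epsilon>"
      using kappa_lipschitz[OF that(1), of Q] by (simp add: dist_real_def field_simps)
  qed
  then show ?thesis
    using Metric_space.metric_continuous_map[OF dE_metric Met_TC.Metric_space_axioms, of kappa] by simp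
qed

lemma kappa_lower_bound_on_compact:
  assumes "K \<subseteq> LC" "compactin (Metric_space.mtopology ProjPlane dE) K"
  shows "\<exists>\<kappa>>0. \<forall>L\<in>K. \<kappa> \<le> kappa L"
proof (cases "K = {}")
  case False
  have "compact (kappa ` K)"
    using image_compactin[OF assms(2) continuous_map_kappa] by simp
  then obtain L0 where "L0 \<in> K" "\<forall>L\<in>K. kappa L0 \<le> kappa L"
    using compact_attains_inf[of "kappa ` K"] False by auto
  then show ?thesis using kappa_pos assms(1) by blast
qed (auto intro: exI[of _ 1])

lemma unit_rep_null: "X \<in> S3 \<Longrightarrow> herm (unit_rep X) (unit_rep X) = 0"
  by (simp add: S3_def qform_def unit_rep_def herm_sesquilinear)

lemma eta_annulus_le:
  assumes "L \<in> LC" "X \<in> S3" "0 < \<delta>" "\<delta> \<le> r" "r \<le> kappa L / 7"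
  shows "eta L (annulus X r \<delta>) \<le> ennreal (800 / (kappa L)^2 * sqrt \<delta>)"
proof -
  define w x where "w = rep L" and "x = unit_rep X"
  have w: "0 < qneg w" using assms(1) by (simp add: LC_def qneg_def w_def)
  have X: "X \<in> ProjPlane" using assms(2) by (simp add: S3_def)
  interpret null_vector_and_chain w x
    using w norm_unit_rep[OF X] unit_rep_null[OF assms(2)] by unfold_locales (simp_all add: x_def)
  have ne: "ne^2 = 1 / kappa L" using norm_e1_sq[OF w] by (simp add: kappa_def w_def)
  have "annulus X r \<delta> \<inter> chain_of L \<subseteq> (\<lambda>t. line (chain_curve w t)) ` annulus_params r \<delta>"
  proof
    fix P assume "P \<in> annulus X r \<delta> \<inter> chain_of L"
    then have P: "P \<in> S3" "herm (rep P) w = 0" "r \<le> dvis X P" "dvis X P \<le> r + \<delta>"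
      by (auto simp: annulus_def chain_of_def w_def)
    then obtain t where t: "P = line (chain_curve w t)" using chain_parametrisation[OF w] by blast
    have x0: "x \<noteq> 0" using norm_unit_rep[OF X] by (auto simp: x_def)
    have "dvis X P = dvis_vec x (chain_curve w t)"
      using dvis_line[OF x0 chain_curve_nonzero[OF w], of t] line_unit_rep[OF X] t by (simp add: x_def)
    then show "P \<in> (\<lambda>t. line (chain_curve w t)) ` annulus_params r \<delta>" using P t by auto
  qed
  moreover have "r \<le> 1 / (7 * ne^2)" using assms(5) ne by simp
  ultimately have "eta L (annulus X r \<delta>) \<le> ennreal (800 * ne^4 * sqrt \<delta>)"
    unfolding eta_def using hausdorff_annulus_le[OF assms(3,4)] by blast
  also have "800 * ne^4 * sqrt \<delta> = 800 * (ne^2)^2 * sqrt \<delta>" by (simp flip: power_mult)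
  also have "\<dots> = 800 / (kappa L)^2 * sqrt \<delta>" unfolding ne by (simp add: power_divide)
  finally show ?thesis .
qed

theorem lemma5p20:
  assumes "K \<subseteq> LC"
    and "compactin (Metric_space.mtopology ProjPlane dE) K"
  shows "\<exists>r0 > 0. \<exists>C::real. \<forall>x \<in> S3. \<forall>L \<in> K. \<forall>r \<delta>.
           0 < \<delta> \<and> \<delta> \<le> r \<and> r \<le> r0 \<longrightarrow>
           eta L (annulus x r \<delta>) \<le> ennreal (C * sqrt \<delta>)"
proof -
  obtain \<kappa> where \<kappa>: "0 < \<kappa>" "\<forall>L\<in>K. \<kappa> \<le> kappa L"
    using kappa_lower_bound_on_compact[OF assms] by blast
  have "eta L (annulus x r \<delta>) \<le> ennreal (800 / \<kappa>^2 * sqrt \<delta>)"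
    if "x \<in> S3" "L \<in> K" "0 < \<delta>" "\<delta> \<le> r" "r \<le> \<kappa> / 7" for x L r \<delta>
  proof -
    have "\<kappa> \<le> kappa L" "L \<in> LC" using \<kappa>(2) that(2) assms(1) by auto
    then have "eta L (annulus x r \<delta>) \<le> ennreal (800 / (kappa L)^2 * sqrt \<delta>)"
      using that by (intro eta_annulus_le) auto
    moreover have "800 / (kappa L)^2 * sqrt \<delta> \<le> 800 / \<kappa>^2 * sqrt \<delta>"
      using \<open>\<kappa> \<le> kappa L\<close> \<kappa>(1) that(3) by (intro mult_right_mono divide_left_mono power_mono) auto
    ultimately show ?thesis by (rule order_trans[OF _ ennreal_leI])
  qed
  then show ?thesis using \<kappa>(1) by (intro exI[of _ "\<kappa> / 7"] conjI exI[of _ "800 / \<kappa>^2"]) auto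
qed

end
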